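(* For every $\tau\in\Gamma_S^\infty$, every integer $R\ge1$ and every $x\in(0,1]$, $$P_\tau(x)\;\ge\;1-\frac1R-x\,|\bar{\mathcal B}_R|.$$
   Context: $\Gamma$ is the set of planar rooted, locally finite trees whose root $r$ has degree one; $\Gamma_S^\infty\subset\Gamma$ is the set of infinite trees with exactly one infinite non-backtracking path from $r$ (the spine), with spine vertices $s_1,s_2,\dots$ ordered away from $r$ (set $s_0=r$). $|G|$ is the number of edges of a graph $G$. For $i\ge1$, $\mathcal A^i$ is the component containing $s_i$ after deleting the spine edges $\{s_{i-1},s_i\},\{s_i,s_{i+1}\}$; the hull $\bar{\mathcal B}_R$ is the union of the spine path from $r$ to $s_R$ and $\mathcal A^1,\dots,\mathcal A^R$, so $|\bar{\mathcal B}_R|=R+\sum_{i=1}^R|\mathcal A^i|$. For simple random walk $\omega$ on $\tau$ started at $r$, $P_\tau(x)=\sum_{t\ge1}\mathbb P(\omega(t)=r,\ \omega(t')\ne r\text{ for }0<t'<t\mid \omega(0)=r)(1-x)^{t/2}$ is the generating function of first-return probabilities to the root. *)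

theory Defs
  imports Complex_Main
begin

text \<open>Planarity (a choice of cyclic order of children)
  plays no role in the statement and is not represented.\<close>

definition no_cycles :: "('a \<Rightarrow> 'a \<Rightarrow> bool) \<Rightarrow> bool" where
  "no_cycles E \<longleftrightarrow>
     \<not> (\<exists>cs. length cs \<ge> 3 \<and> distinct cs \<and>
            (\<forall>i. Suc i < length cs \<longrightarrow> E (cs ! i) (cs ! Suc i)) \<and>
            E (last cs) (hd cs))"

definition in_Gamma :: "'a set \<Rightarrow> ('a \<Rightarrow> 'a \<Rightarrow> bool) \<Rightarrow> 'a \<Rightarrow> bool" where
  "in_Gamma V E r \<longleftrightarrow>
     r \<in> V \<and>
     (\<forall>u w. E u w \<longrightarrow> u \<in> V \<and> w \<in> V) \<and>
     (\<forall>u w. E u w \<longrightarrow> E w u) \<and>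
     (\<forall>v. \<not> E v v) \<and>
     (\<forall>v\<in>V. E\<^sup>*\<^sup>* r v) \<and>
     no_cycles E \<and>
     (\<forall>v\<in>V. finite {w. E v w}) \<and>
     card {w. E r w} = 1"

definition nbt_path :: "('a \<Rightarrow> 'a \<Rightarrow> bool) \<Rightarrow> 'a \<Rightarrow> (nat \<Rightarrow> 'a) \<Rightarrow> bool" where
  "nbt_path E r s \<longleftrightarrow> s 0 = r \<and> (\<forall>i. E (s i) (s (Suc i))) \<and> (\<forall>i. s (Suc (Suc i)) \<noteq> s i)"

definition in_Gamma_S_inf :: "'a set \<Rightarrow> ('a \<Rightarrow> 'a \<Rightarrow> bool) \<Rightarrow> 'a \<Rightarrow> bool" where
  "in_Gamma_S_inf V E r \<longleftrightarrow> in_Gamma V E r \<and> infinite V \<and> (\<exists>!s. nbt_path E r s)"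

definition spine :: "('a \<Rightarrow> 'a \<Rightarrow> bool) \<Rightarrow> 'a \<Rightarrow> nat \<Rightarrow> 'a" where
  "spine E r = (THE s. nbt_path E r s)"

definition edges_of :: "('a \<Rightarrow> 'a \<Rightarrow> bool) \<Rightarrow> 'a set set" where
  "edges_of E = {{u, w} | u w. E u w}"

text \<open>A^i: the component containing s_i after deleting the spine edges
  {s_(i-1), s_i} and {s_i, s_(i+1)} (here as its set of edges).\<close>
definition A_comp_edges :: "('a \<Rightarrow> 'a \<Rightarrow> bool) \<Rightarrow> 'a \<Rightarrow> nat \<Rightarrow> 'a set set" where
  "A_comp_edges E r i =
     (let s = spine E r;
          E' = (\<lambda>u w. E u w \<and> {u, w} \<noteq> {s (i - 1), s i} \<and> {u, w} \<noteq> {s i, s (Suc i)})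
      in {{u, w} | u w. E' u w \<and> E'\<^sup>*\<^sup>* (s i) u})"

definition hull_edges :: "('a \<Rightarrow> 'a \<Rightarrow> bool) \<Rightarrow> 'a \<Rightarrow> nat \<Rightarrow> 'a set set" where
  "hull_edges E r R =
     {{spine E r i, spine E r (Suc i)} | i. i < R} \<union> (\<Union>i\<in>{1..R}. A_comp_edges E r i)"

definition hull_size :: "('a \<Rightarrow> 'a \<Rightarrow> bool) \<Rightarrow> 'a \<Rightarrow> nat \<Rightarrow> nat" where
  "hull_size E r R = card (hull_edges E r R)"

definition deg :: "('a \<Rightarrow> 'a \<Rightarrow> bool) \<Rightarrow> 'a \<Rightarrow> nat" where
  "deg E v = card {w. E v w}"

definition first_return_walks :: "('a \<Rightarrow> 'a \<Rightarrow> bool) \<Rightarrow> 'a \<Rightarrow> nat \<Rightarrow> 'a list set" where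
  "first_return_walks E r t =
     {p. t \<ge> 1 \<and> length p = Suc t \<and> p ! 0 = r \<and> p ! t = r \<and>
         (\<forall>i<t. E (p ! i) (p ! Suc i)) \<and> (\<forall>i. 0 < i \<and> i < t \<longrightarrow> p ! i \<noteq> r)}"

definition first_return_prob :: "('a \<Rightarrow> 'a \<Rightarrow> bool) \<Rightarrow> 'a \<Rightarrow> nat \<Rightarrow> real" where
  "first_return_prob E r t =
     (\<Sum>p\<in>first_return_walks E r t. \<Prod>i<t. 1 / real (deg E (p ! i)))"

definition P_gen :: "('a \<Rightarrow> 'a \<Rightarrow> bool) \<Rightarrow> 'a \<Rightarrow> real \<Rightarrow> real" where
  "P_gen E r x = (\<Sum>t. first_return_prob E r (Suc t) * (1 - x) powr (real (Suc t) / 2))"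

end

theory Submission
  imports Defs "HOL-Library.Transitive_Closure_Table" "HOL-Analysis.Convex"
begin

(* Consider the simple random walk from the root r that is killed when it
   returns to r or when it first hits the spine vertex s_R; let killed n v be its
   sub-probability mass at v at time n.  Three estimates hold:
   (1) mass balance: returns + hits of s_R + surviving mass = 1 at every time;
   (2) the function  level u = #{j < R. the spine edge {s_j, s_(j+1)} separates u from r}
       has Laplacian delta_r - delta_(s_R), so it is a martingale for the killed walk;
       as level (s_R) = R, the walk hits s_R with probability at most 1/R;
   (3) before being killed the walk lives in the finite set "inner" of vertices reachable
       from r avoiding s_R; a maximum principle bounds its expected number of visits to
       v by deg v, so its expected lifetime is at most the degree sum over inner,
       which is <= 2 |B_R|.
   Let a_t = killed (t+1) r; it is at most the first-return probability at time t+1.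
   Bernoulli's inequality (1-x)^((t+1)/2) >= 1 - x(t+1)/2 gives, for every N,
   P(x) >= sum_(t<N) a_t - x/2 sum_(t<N) (t+1) a_t, and for N >= 2/x the estimates
   (1)-(3) bound the right-hand side from below by 1 - 1/R - x |B_R|. *)

section \<open>Walk measures on locally finite graphs\<close>

definition walks_within :: "('a \<Rightarrow> 'a \<Rightarrow> bool) \<Rightarrow> 'a \<Rightarrow> ('a \<Rightarrow> bool) \<Rightarrow> nat \<Rightarrow> 'a \<Rightarrow> 'a list set" where
  "walks_within E r A n v = {p. length p = Suc n \<and> p ! 0 = r \<and> p ! n = v \<and>
      (\<forall>i<n. E (p ! i) (p ! Suc i)) \<and> (\<forall>i. 0 < i \<and> i < n \<longrightarrow> A (p ! i))}"

definition walk_weight :: "('a \<Rightarrow> 'a \<Rightarrow> bool) \<Rightarrow> nat \<Rightarrow> 'a list \<Rightarrow> real" where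
  "walk_weight E n p = (\<Prod>i<n. 1 / real (deg E (p ! i)))"

definition walk_mass :: "('a \<Rightarrow> 'a \<Rightarrow> bool) \<Rightarrow> 'a \<Rightarrow> ('a \<Rightarrow> bool) \<Rightarrow> nat \<Rightarrow> 'a \<Rightarrow> real" where
  "walk_mass E r A n v = (\<Sum>p\<in>walks_within E r A n v. walk_weight E n p)"

lemma walks_within_0: "walks_within E r A 0 v = (if v = r then {[r]} else {})"
proof -
  have "p = [r]" if "length p = Suc 0" "p ! 0 = r" for p :: "'a list"
    using that by (cases p) auto
  then show ?thesis unfolding walks_within_def by auto
qed

lemma walks_within_Suc:
  "walks_within E r A (Suc n) v =
     (\<lambda>q. q @ [v]) ` (\<Union>u\<in>{u. E u v \<and> (n = 0 \<or> A u)}. walks_within E r A n u)"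
proof
  show "walks_within E r A (Suc n) v \<subseteq> (\<lambda>q. q @ [v]) ` (\<Union>u\<in>{u. E u v \<and> (n = 0 \<or> A u)}. walks_within E r A n u)"
  proof
    fix p assume p: "p \<in> walks_within E r A (Suc n) v"
    define q where "q = take (Suc n) p"
    have lp: "length p = Suc (Suc n)" using p by (simp add: walks_within_def)
    have pq: "p = q @ [v]"
    proof -
      have "p = take (Suc n) p @ drop (Suc n) p" by simp
      moreover have "drop (Suc n) p = [p ! Suc n]"
        using lp by (metis Cons_nth_drop_Suc drop_all le_refl lessI)
      ultimately show ?thesis using p by (simp add: walks_within_def q_def)
    qed
    have "q \<in> walks_within E r A n (p ! n)"
      using p lp unfolding walks_within_def by (auto simp: q_def)
    moreover have "E (p ! n) v \<and> (n = 0 \<or> A (p ! n))"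
      using p unfolding walks_within_def by auto
    ultimately show "p \<in> (\<lambda>q. q @ [v]) ` (\<Union>u\<in>{u. E u v \<and> (n = 0 \<or> A u)}. walks_within E r A n u)"
      using pq by blast
  qed
next
  show "(\<lambda>q. q @ [v]) ` (\<Union>u\<in>{u. E u v \<and> (n = 0 \<or> A u)}. walks_within E r A n u) \<subseteq> walks_within E r A (Suc n) v"
  proof
    fix p assume "p \<in> (\<lambda>q. q @ [v]) ` (\<Union>u\<in>{u. E u v \<and> (n = 0 \<or> A u)}. walks_within E r A n u)"
    then obtain q u where pq: "p = q @ [v]" and u: "E u v" "n = 0 \<or> A u"
      and q: "q \<in> walks_within E r A n u"
      by blast
    have lq: "length q = Suc n" using q by (simp add: walks_within_def)
    have p_prefix: "\<And>i. i \<le> n \<Longrightarrow> p ! i = q ! i" using pq lq by (simp add: nth_append)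
    have p_last: "p ! Suc n = v" using pq lq by (simp add: nth_append)
    have "E (p ! i) (p ! Suc i)" if "i < Suc n" for i
      using that p_prefix p_last u q
      by (cases "i = n") (auto simp: walks_within_def)
    moreover have "A (p ! i)" if "0 < i" "i < Suc n" for i
      using that p_prefix u q by (cases "i = n") (auto simp: walks_within_def)
    ultimately show "p \<in> walks_within E r A (Suc n) v"
      using pq lq p_prefix p_last q unfolding walks_within_def by auto
  qed
qed

lemma finite_walks_within:
  assumes sym: "\<And>u w. E u w \<Longrightarrow> E w u" and lf: "\<And>v. finite {w. E v w}"
  shows "finite (walks_within E r A n v)"
proof (induction n arbitrary: v)
  case 0 then show ?case by (simp add: walks_within_0)
next
  case (Suc n)
  have "{u. E u v \<and> (n = 0 \<or> A u)} \<subseteq> {u. E v u}" using sym by auto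
  then have "finite {u. E u v \<and> (n = 0 \<or> A u)}" using lf finite_subset by blast
  then show ?case using Suc by (simp add: walks_within_Suc)
qed

lemma walk_weight_nonneg: "0 \<le> walk_weight E n p"
  unfolding walk_weight_def by (intro prod_nonneg) auto

lemma walk_mass_nonneg: "walk_mass E r A n v \<ge> 0"
  unfolding walk_mass_def by (intro sum_nonneg walk_weight_nonneg)

lemma walk_mass_0: "walk_mass E r A 0 v = (if v = r then 1 else 0)"
  by (simp add: walk_mass_def walks_within_0 walk_weight_def)

lemma walk_mass_Suc:
  assumes sym: "\<And>u w. E u w \<Longrightarrow> E w u" and lf: "\<And>v. finite {w. E v w}"
  shows "walk_mass E r A (Suc n) v =
           (\<Sum>u\<in>{u. E u v \<and> (n = 0 \<or> A u)}. walk_mass E r A n u / real (deg E u))"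
proof -
  let ?U = "{u. E u v \<and> (n = 0 \<or> A u)}"
  have fU: "finite ?U"
  proof -
    have "?U \<subseteq> {u. E v u}" using sym by auto
    then show ?thesis using lf finite_subset by blast
  qed
  have inj: "inj_on (\<lambda>q. q @ [v]) (\<Union>u\<in>?U. walks_within E r A n u)"
    by (auto intro!: inj_onI)
  have disj: "\<forall>u\<in>?U. \<forall>u'\<in>?U. u \<noteq> u' \<longrightarrow> walks_within E r A n u \<inter> walks_within E r A n u' = {}"
    by (auto simp: walks_within_def)
  have weight_snoc: "walk_weight E (Suc n) (q @ [v]) = walk_weight E n q / real (deg E u)"
    if "q \<in> walks_within E r A n u" for q u
  proof -
    have lq: "length q = Suc n" and qn: "q ! n = u" using that by (auto simp: walks_within_def)
    have "walk_weight E (Suc n) (q @ [v]) =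
        (\<Prod>i<n. 1 / real (deg E ((q @ [v]) ! i))) * (1 / real (deg E ((q @ [v]) ! n)))"
      by (simp add: walk_weight_def)
    also have "(\<Prod>i<n. 1 / real (deg E ((q @ [v]) ! i))) = walk_weight E n q"
      unfolding walk_weight_def using lq by (intro prod.cong) (auto simp: nth_append)
    also have "(q @ [v]) ! n = u" using lq qn by (simp add: nth_append)
    finally show ?thesis by simp
  qed
  have "walk_mass E r A (Suc n) v =
      (\<Sum>p\<in>(\<Union>u\<in>?U. walks_within E r A n u). walk_weight E (Suc n) (p @ [v]))"
    unfolding walk_mass_def walks_within_Suc using inj by (simp add: sum.reindex)
  also have "\<dots> = (\<Sum>u\<in>?U. \<Sum>p\<in>walks_within E r A n u. walk_weight E (Suc n) (p @ [v]))"
    using fU disj finite_walks_within[OF sym lf] by (intro sum.UNION_disjoint) auto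
  also have "\<dots> = (\<Sum>u\<in>?U. \<Sum>p\<in>walks_within E r A n u. walk_weight E n p / real (deg E u))"
    using weight_snoc by (intro sum.cong refl) auto
  also have "\<dots> = (\<Sum>u\<in>?U. walk_mass E r A n u / real (deg E u))"
    by (simp add: walk_mass_def sum_divide_distrib)
  finally show ?thesis .
qed

lemma walk_mass_sum_le_1:
  assumes sym: "\<And>u w. E u w \<Longrightarrow> E w u" and lf: "\<And>v. finite {w. E v w}"
  shows "finite F \<Longrightarrow> (\<Sum>v\<in>F. walk_mass E r A n v) \<le> 1"
proof (induction n arbitrary: F)
  case 0
  have "(\<Sum>v\<in>F. walk_mass E r A 0 v) = (\<Sum>v\<in>F. if v = r then 1 else 0)"
    by (simp add: walk_mass_0)
  also have "\<dots> \<le> 1" using 0 by (simp add: sum.If_cases)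
  finally show ?case .
next
  case (Suc n)
  define F' where "F' = {u. \<exists>v\<in>F. E u v}"
  have fF': "finite F'"
  proof -
    have "F' \<subseteq> (\<Union>v\<in>F. {u. E v u})" using sym by (auto simp: F'_def)
    then show ?thesis using Suc.prems lf finite_subset by blast
  qed
  let ?P = "\<lambda>v u. E u v \<and> (n = 0 \<or> A u)"
  let ?f = "\<lambda>u. walk_mass E r A n u / real (deg E u)"
  have "(\<Sum>v\<in>F. walk_mass E r A (Suc n) v) = (\<Sum>v\<in>F. \<Sum>u\<in>{u\<in>F'. ?P v u}. ?f u)"
  proof (intro sum.cong refl)
    fix v assume "v \<in> F"
    then have "{u. ?P v u} = {u\<in>F'. ?P v u}" by (auto simp: F'_def)
    then show "walk_mass E r A (Suc n) v = (\<Sum>u\<in>{u\<in>F'. ?P v u}. ?f u)"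
      by (simp add: walk_mass_Suc[OF sym lf])
  qed
  also have "\<dots> = (\<Sum>u\<in>F'. \<Sum>v\<in>{v\<in>F. ?P v u}. ?f u)"
    using Suc.prems fF' by (rule sum.swap_restrict)
  also have "\<dots> \<le> (\<Sum>u\<in>F'. walk_mass E r A n u)"
  proof (intro sum_mono)
    fix u
    have c: "card {v\<in>F. ?P v u} \<le> deg E u"
      unfolding deg_def by (rule card_mono[OF lf]) auto
    have "(\<Sum>v\<in>{v\<in>F. ?P v u}. ?f u) = walk_mass E r A n u * (real (card {v\<in>F. ?P v u}) / real (deg E u))"
      by simp
    also have "\<dots> \<le> walk_mass E r A n u * 1"
      using c by (intro mult_left_mono) (auto simp: walk_mass_nonneg divide_le_eq_1)
    finally show "(\<Sum>v\<in>{v\<in>F. ?P v u}. ?f u) \<le> walk_mass E r A n u" by simp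
  qed
  also have "\<dots> \<le> 1" using Suc.IH fF' by blast
  finally show ?case .
qed

lemma walk_mass_le_1:
  assumes sym: "\<And>u w. E u w \<Longrightarrow> E w u" and lf: "\<And>v. finite {w. E v w}"
  shows "walk_mass E r A n v \<le> 1"
  using walk_mass_sum_le_1[OF sym lf, where F="{v}"] by simp

lemma first_return_prob_eq_walk_mass:
  "first_return_prob E r (Suc t) = walk_mass E r (\<lambda>v. v \<noteq> r) (Suc t) r"
  unfolding first_return_prob_def walk_mass_def walk_weight_def first_return_walks_def walks_within_def
  by (intro sum.cong refl) auto

section \<open>Real inequalities and convergence of P_gen\<close>

lemma bernoulli_powr:
  fixes y a :: real
  assumes "0 \<le> y" "y \<le> 1" "1 \<le> a"
  shows "1 - a * (1 - y) \<le> y powr a"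
proof (cases "y = 0")
  case True then show ?thesis using assms by simp
next
  case False
  then have y0: "0 < y" using assms by simp
  have "(y powr a) powr (1 / a) * 1 powr (1 - 1 / a) \<le> (1 / a) * (y powr a) + (1 - 1 / a) * 1"
    using assms y0 by (intro Youngs_inequality_0) auto
  moreover have "(y powr a) powr (1 / a) = y" using assms y0 by (simp add: powr_powr)
  ultimately have "y \<le> (1 / a) * (y powr a) + (1 - 1 / a)" by simp
  then have "a * y \<le> a * ((1 / a) * (y powr a) + (1 - 1 / a))" using assms by simp
  also have "\<dots> = y powr a + a - 1" using assms by (simp add: field_simps)
  finally show ?thesis by (simp add: algebra_simps)
qed

lemma average_ge_bound_imp_eq:
  fixes f :: "'b \<Rightarrow> real"
  assumes "finite A" "\<forall>a\<in>A. f a \<le> M" "real (card A) * M \<le> (\<Sum>a\<in>A. f a)" "a \<in> A"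
  shows "f a = M"
proof (rule ccontr)
  assume "f a \<noteq> M"
  then have "f a < M" using assms by force
  then have "(\<Sum>a\<in>A. f a) < (\<Sum>a\<in>A. M)"
    using assms by (intro sum_strict_mono_ex1) auto
  then show False using assms(3) by simp
qed

lemma powr_half_power:
  fixes y :: real assumes "0 \<le> y"
  shows "y powr (real (Suc t) / 2) = (y powr (1/2)) ^ Suc t"
proof (cases "y = 0")
  case True then show ?thesis by simp
next
  case False
  then have "y > 0" using assms by simp
  then have "(y powr (1/2)) ^ Suc t = (y powr (1/2)) powr real (Suc t)"
    by (intro powr_realpow[symmetric]) simp
  also have "\<dots> = y powr (real (Suc t) / 2)" by (simp add: powr_powr)
  finally show ?thesis by simp
qed

text \<open>For 0 < x \<le> 1 the series P_gen converges (it is dominated by a geometric series),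
  so it dominates each of its partial sums.\<close>
lemma partial_sum_le_P_gen:
  assumes sym: "\<And>u w. E u w \<Longrightarrow> E w u" and lf: "\<And>v. finite {w. E v w}"
    and x: "0 < x" "x \<le> 1"
  shows "(\<Sum>t<N. first_return_prob E r (Suc t) * (1 - x) powr (real (Suc t) / 2)) \<le> P_gen E r x"
proof -
  let ?g = "\<lambda>t. first_return_prob E r (Suc t) * (1 - x) powr (real (Suc t) / 2)"
  define q where "q = (1 - x) powr (1/2)"
  have q0: "0 \<le> q" by (simp add: q_def)
  have q1: "q < 1" using x unfolding q_def by (simp add: powr_half_sqrt)
  have geometric: "summable (\<lambda>t. q ^ Suc t)"
    using q0 q1 by (simp add: summable_geometric summable_mult)
  have nonneg: "\<And>t. 0 \<le> ?g t"
    by (simp add: first_return_prob_eq_walk_mass walk_mass_nonneg)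
  have dominated: "norm (?g t) \<le> q ^ Suc t" for t
  proof -
    have "norm (?g t) = ?g t" using nonneg by simp
    also have "\<dots> \<le> 1 * (1 - x) powr (real (Suc t) / 2)"
      by (intro mult_right_mono)
        (auto simp: first_return_prob_eq_walk_mass walk_mass_le_1[OF sym lf])
    also have "\<dots> = q ^ Suc t" using x powr_half_power[of "1 - x" t] by (simp add: q_def)
    finally show ?thesis .
  qed
  have "summable ?g" by (rule summable_comparison_test[OF _ geometric]) (use dominated in auto)
  then show ?thesis unfolding P_gen_def
    by (rule sum_le_suminf) (use nonneg in auto)
qed

section \<open>Graph facts: Koenig's lemma and bridges of acyclic graphs\<close>

definition reach_avoiding :: "('a \<Rightarrow> 'a \<Rightarrow> bool) \<Rightarrow> 'a set \<Rightarrow> 'a \<Rightarrow> 'a set" where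
  "reach_avoiding F X v = {u. (\<lambda>a b. F a b \<and> b \<notin> X)\<^sup>*\<^sup>* v u}"

text \<open>A walk from v avoiding X either stays at v or starts with a step to some w \<notin> X and
  never returns to v afterwards (cut the walk at its last visit to v).\<close>
lemma reach_avoiding_split:
  assumes "(\<lambda>a b. F a b \<and> b \<notin> X)\<^sup>*\<^sup>* v u"
  shows "u = v \<or> (\<exists>w. F v w \<and> w \<notin> X \<and> (\<lambda>a b. F a b \<and> b \<notin> {v})\<^sup>*\<^sup>* w u)"
  using assms
proof (induction rule: rtranclp_induct)
  case base then show ?case by simp
next
  case (step y z)
  show ?case
  proof (cases "z = v")
    case True then show ?thesis by simp
  next
    case False
    from step.IH show ?thesis
    proof
      assume "y = v" then show ?thesis using step.hyps False by blast
    next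
      assume "\<exists>w. F v w \<and> w \<notin> X \<and> (\<lambda>a b. F a b \<and> b \<notin> {v})\<^sup>*\<^sup>* w y"
      then obtain w where w: "F v w" "w \<notin> X" "(\<lambda>a b. F a b \<and> b \<notin> {v})\<^sup>*\<^sup>* w y" by blast
      have "(\<lambda>a b. F a b \<and> b \<notin> {v})\<^sup>*\<^sup>* w z"
        using w(3) step.hyps(2) False by (auto intro: rtranclp.rtrancl_into_rtrancl)
      then show ?thesis using w by blast
    qed
  qed
qed

text \<open>Pigeonhole step of Koenig's lemma: one of the finitely many children still reaches
  infinitely many vertices without going back.\<close>
lemma infinite_reach_step:
  assumes lf: "\<And>v. finite {w. F v w}" and inf: "infinite (reach_avoiding F X v)"
  shows "\<exists>w. F v w \<and> w \<notin> X \<and> infinite (reach_avoiding F {v} w)"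
proof (rule ccontr)
  assume "\<not> ?thesis"
  then have fin: "\<forall>w\<in>{w. F v w \<and> w \<notin> X}. finite (reach_avoiding F {v} w)" by blast
  have "reach_avoiding F X v \<subseteq> insert v (\<Union>w\<in>{w. F v w \<and> w \<notin> X}. reach_avoiding F {v} w)"
    using reach_avoiding_split[of F X v] unfolding reach_avoiding_def by blast
  moreover have "finite (insert v (\<Union>w\<in>{w. F v w \<and> w \<notin> X}. reach_avoiding F {v} w))"
    using fin lf[of v] by auto
  ultimately show False using inf finite_subset by blast
qed

text \<open>The sequence of directed edges chosen by iterating the pigeonhole step.\<close>
primrec koenig_seq :: "('a \<Rightarrow> 'a \<Rightarrow> bool) \<Rightarrow> 'a \<Rightarrow> 'a \<Rightarrow> nat \<Rightarrow> 'a \<times> 'a" where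
  "koenig_seq F a b 0 = (a, b)"
| "koenig_seq F a b (Suc n) = (snd (koenig_seq F a b n),
     SOME w. F (snd (koenig_seq F a b n)) w \<and> w \<notin> {fst (koenig_seq F a b n)} \<and>
             infinite (reach_avoiding F {snd (koenig_seq F a b n)} w))"

lemma koenig_nbt_path:
  assumes lf: "\<And>v. finite {w. F v w}" and inf: "infinite {u. F\<^sup>*\<^sup>* v0 u}"
  shows "\<exists>q. q 0 = v0 \<and> (\<forall>n. F (q n) (q (Suc n))) \<and> (\<forall>n. q (Suc (Suc n)) \<noteq> q n)"
proof -
  have "reach_avoiding F {} v0 = {u. F\<^sup>*\<^sup>* v0 u}" unfolding reach_avoiding_def by simp
  then obtain w1 where w1: "F v0 w1" "infinite (reach_avoiding F {v0} w1)"
    using infinite_reach_step[where v=v0 and X="{}" and F=F, OF lf] inf by auto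
  let ?st = "koenig_seq F v0 w1"
  let ?P = "\<lambda>n w. F (snd (?st n)) w \<and> w \<notin> {fst (?st n)} \<and> infinite (reach_avoiding F {snd (?st n)} w)"
  have chosen: "?P n (SOME w. ?P n w)"
    if "infinite (reach_avoiding F {fst (?st n)} (snd (?st n)))" for n
  proof -
    have "\<exists>w. ?P n w" using infinite_reach_step[of F, OF lf that] .
    then show ?thesis by (rule someI_ex)
  qed
  have invariant: "F (fst (?st n)) (snd (?st n)) \<and> infinite (reach_avoiding F {fst (?st n)} (snd (?st n)))" for n
  proof (induction n)
    case 0 then show ?case using w1 by simp
  next
    case (Suc n) then show ?case using chosen[of n] by simp
  qed
  have no_backtrack: "snd (?st (Suc n)) \<noteq> fst (?st n)" for n
    using chosen[of n] invariant[of n] by simp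
  define q where "q n = fst (?st n)" for n
  have q_Suc: "q (Suc n) = snd (?st n)" for n by (simp add: q_def)
  show ?thesis
  proof (intro exI conjI allI)
    show "q 0 = v0" by (simp add: q_def)
    show "F (q n) (q (Suc n))" for n using invariant[of n] by (simp add: q_Suc q_def)
    show "q (Suc (Suc n)) \<noteq> q n" for n using no_backtrack[of n] by (simp add: q_Suc q_def)
  qed
qed

lemma rtrancl_path_steps:
  assumes "rtrancl_path F x xs y"
  shows "(\<forall>i. Suc i < length (x # xs) \<longrightarrow> F ((x # xs) ! i) ((x # xs) ! Suc i)) \<and>
         (xs \<noteq> [] \<longrightarrow> last xs = y) \<and> (xs = [] \<longrightarrow> x = y)"
  using assms
proof (induction rule: rtrancl_path.induct)
  case (base x) then show ?case by simp
next
  case (step x y ys z)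
  have "F ((x # y # ys) ! i) ((x # y # ys) ! Suc i)" if "Suc i < length (x # y # ys)" for i
    using step that by (cases i) auto
  then show ?case using step by auto
qed

text \<open>In an irreflexive symmetric graph without cycles every edge is a bridge: its endpoints
  are not connected once the edge is removed (otherwise a shortest detour closes a cycle).\<close>
lemma edge_is_bridge:
  assumes sym: "\<And>u w. E u w \<Longrightarrow> E w u" and irr: "\<And>v. \<not> E v v" and acyclic: "no_cycles E"
    and ab: "E a b" and reach: "(\<lambda>u w. E u w \<and> {u, w} \<noteq> {a, b})\<^sup>*\<^sup>* a b"
  shows False
proof -
  let ?F = "\<lambda>u w. E u w \<and> {u, w} \<noteq> {a, b}"
  have anb: "a \<noteq> b" using ab irr by auto
  obtain xs where "rtrancl_path ?F a xs b" using reach rtranclp_eq_rtrancl_path[of ?F a b] by blast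
  then obtain ys where p: "rtrancl_path ?F a ys b" and d: "distinct (a # ys)"
    by (rule rtrancl_path_distinct)
  note steps = rtrancl_path_steps[OF p]
  have yne: "ys \<noteq> []" using steps anb by auto
  have ly: "last ys = b" using steps yne by auto
  have l2: "length ys \<ge> 2"
  proof (rule ccontr)
    assume "\<not> length ys \<ge> 2"
    then obtain c where "ys = [c]" using yne by (cases ys) (auto simp: Suc_le_eq)
    then have "?F a b" using steps ly by auto
    then show False by simp
  qed
  let ?cs = "a # ys"
  have "\<forall>i. Suc i < length ?cs \<longrightarrow> E (?cs ! i) (?cs ! Suc i)" using steps by blast
  moreover have "E (last ?cs) (hd ?cs)" using ly yne ab sym by simp
  moreover have "length ?cs \<ge> 3" using l2 by simp
  ultimately show False using acyclic d unfolding no_cycles_def by blast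
qed

text \<open>An infinite non-backtracking path in an irreflexive acyclic graph never repeats a vertex:
  a shortest repetition would be a loop (length 1), a backtrack (length 2) or a cycle.\<close>
lemma nbt_path_no_repeat:
  assumes irr: "\<And>v. \<not> E v v" and acyclic: "no_cycles E" and path: "nbt_path E r s"
    and "0 < d"
  shows "s a \<noteq> s (a + d)"
proof (rule ccontr)
  have step: "E (s i) (s (Suc i))" and no_back: "s (Suc (Suc i)) \<noteq> s i" for i
    using path by (auto simp: nbt_path_def)
  assume "\<not> s a \<noteq> s (a + d)"
  then have ex: "\<exists>d. 0 < d \<and> (\<exists>a. s a = s (a + d))" using \<open>0 < d\<close> by auto
  define m where "m = (LEAST d. 0 < d \<and> (\<exists>a. s a = s (a + d)))"
  have m_pos: "0 < m" and m_rep: "\<exists>a. s a = s (a + m)"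
    using LeastI_ex[OF ex] unfolding m_def by auto
  have m_min: "\<And>d a. 0 < d \<Longrightarrow> d < m \<Longrightarrow> s a \<noteq> s (a + d)"
    unfolding m_def using not_less_Least by blast
  obtain a where a: "s a = s (a + m)" using m_rep by blast
  have "m \<noteq> 1" using a step[of a] irr[of "s a"] by auto
  moreover have "m \<noteq> 2" using a no_back[of a] by (auto simp: numeral_2_eq_2)
  ultimately have m3: "m \<ge> 3" using m_pos by linarith
  define cs where "cs = map s [a..<a+m]"
  have len: "length cs = m" by (simp add: cs_def)
  have nth: "\<And>i. i < m \<Longrightarrow> cs ! i = s (a + i)" by (simp add: cs_def)
  have "inj_on s {a..<a + m}"
  proof (rule inj_onI)
    fix i j assume ij: "i \<in> {a..<a+m}" "j \<in> {a..<a+m}" "s i = s j"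
    show "i = j"
    proof (cases i j rule: linorder_cases)
      case less
      then have "j - i < m" using ij by auto
      then show ?thesis using less ij m_min[of "j - i" i] by auto
    next
      case greater
      then have "i - j < m" using ij by auto
      then show ?thesis using greater ij m_min[of "i - j" j] by auto
    qed
  qed
  then have "distinct cs" by (simp add: cs_def distinct_map)
  moreover have "\<forall>i. Suc i < length cs \<longrightarrow> E (cs ! i) (cs ! Suc i)"
    using len nth step by auto
  moreover have "E (last cs) (hd cs)"
  proof -
    have nonempty: "cs \<noteq> []" using len m3 by auto
    then have "last cs = cs ! (m - 1)" using len by (simp add: last_conv_nth)
    then have "last cs = s (a + (m - 1))" using nth m3 by simp
    moreover have "hd cs = s (a + m)" using nth[of 0] m3 a nonempty by (simp add: hd_conv_nth)
    moreover have "Suc (a + (m - 1)) = a + m" using m3 by simp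
    ultimately show ?thesis using step[of "a + (m - 1)"] by simp
  qed
  ultimately show False using acyclic len m3 unfolding no_cycles_def by blast
qed

section \<open>Trees with a unique spine\<close>

locale spine_tree =
  fixes V :: "'a set" and E :: "'a \<Rightarrow> 'a \<Rightarrow> bool" and r :: 'a and R :: nat
  assumes tree: "in_Gamma_S_inf V E r" and R_pos: "R \<ge> 1"
begin

abbreviation s where "s \<equiv> spine E r"

lemma E_sym: "E u w \<Longrightarrow> E w u"
  and E_irrefl: "\<not> E v v"
  and acyclic: "no_cycles E"
  and root_degree: "card {w. E r w} = 1"
  and unique_nbt_path: "\<exists>!t. nbt_path E r t"
  using tree by (auto simp: in_Gamma_S_inf_def in_Gamma_def)

lemma locally_finite: "finite {w. E v w}"
proof (cases "v \<in> V")
  case True then show ?thesis using tree by (auto simp: in_Gamma_S_inf_def in_Gamma_def)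
next
  case False then have "{w. E v w} = {}" using tree by (auto simp: in_Gamma_S_inf_def in_Gamma_def)
  then show ?thesis by simp
qed

lemma spine_nbt: "nbt_path E r s"
  unfolding spine_def using unique_nbt_path by (rule theI')

lemma spine_unique: "nbt_path E r t \<Longrightarrow> t = s"
  using unique_nbt_path spine_nbt by blast

lemma spine_0: "s 0 = r"
  and spine_edge: "E (s i) (s (Suc i))"
  and spine_no_back: "s (Suc (Suc i)) \<noteq> s i"
  using spine_nbt by (auto simp: nbt_path_def)

lemma spine_inj: "s i = s j \<longleftrightarrow> i = j"
proof (cases i j rule: linorder_cases)
  case less
  then show ?thesis using nbt_path_no_repeat[OF E_irrefl acyclic spine_nbt, of "j - i" i] by auto
next
  case greater
  then show ?thesis using nbt_path_no_repeat[OF E_irrefl acyclic spine_nbt, of "i - j" j] by auto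
qed simp

lemma root_nbr: "E r w \<Longrightarrow> w = s 1"
proof -
  assume "E r w"
  moreover have "E r (s 1)" using spine_edge[of 0] spine_0 by simp
  moreover obtain z where "{w. E r w} = {z}" using root_degree by (rule card_1_singletonE)
  ultimately show ?thesis by (metis mem_Collect_eq singletonD)
qed

lemma deg_root: "deg E r = 1" using root_degree by (simp add: deg_def)

lemma spine_R_ne_root: "s R \<noteq> r" using R_pos spine_0 spine_inj[of R 0] by auto

section \<open>The level function\<close>

definition cut :: "nat \<Rightarrow> 'a \<Rightarrow> 'a \<Rightarrow> bool" where
  "cut j u w \<longleftrightarrow> E u w \<and> {u, w} \<noteq> {s j, s (Suc j)}"

definition root_side :: "nat \<Rightarrow> 'a set" where
  "root_side j = {u. (cut j)\<^sup>*\<^sup>* r u}"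

definition beyond :: "nat \<Rightarrow> 'a \<Rightarrow> real" where
  "beyond j u = (if u \<in> root_side j then 0 else 1)"

definition level :: "'a \<Rightarrow> real" where
  "level u = (\<Sum>j<R. beyond j u)"

lemma cut_sym: "cut j u w \<Longrightarrow> cut j w u"
  unfolding cut_def using E_sym[of u w] by (simp add: insert_commute)

lemma root_side_iff:
  assumes "E u w" "{u, w} \<noteq> {s j, s (Suc j)}"
  shows "u \<in> root_side j \<longleftrightarrow> w \<in> root_side j"
proof -
  have "cut j u w" using assms by (simp add: cut_def)
  moreover have "cut j w u" using cut_sym[OF calculation] .
  ultimately show ?thesis unfolding root_side_def by (auto intro: rtranclp.rtrancl_into_rtrancl)
qed

lemma spine_in_root_side: "k \<le> j \<Longrightarrow> s k \<in> root_side j"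
proof (induction k)
  case 0 then show ?case using spine_0 by (simp add: root_side_def)
next
  case (Suc k)
  have "{s k, s (Suc k)} \<noteq> {s j, s (Suc j)}"
    using Suc.prems by (auto simp: doubleton_eq_iff spine_inj)
  moreover have "s k \<in> root_side j" using Suc by simp
  ultimately show ?case using root_side_iff[OF spine_edge] by blast
qed

text \<open>Since the spine edge j is a bridge, s_(j+1) is cut off from r.\<close>
lemma spine_Suc_beyond: "s (Suc j) \<notin> root_side j"
proof
  assume far: "s (Suc j) \<in> root_side j"
  have "(cut j)\<^sup>*\<^sup>* r (s j)" using spine_in_root_side[of j j] by (simp add: root_side_def)
  then have "(cut j)\<^sup>*\<^sup>* (s j) r"
    using symp_rtranclp[of "cut j"] cut_sym by (metis sympD sympI)
  moreover have "(cut j)\<^sup>*\<^sup>* r (s (Suc j))" using far by (simp add: root_side_def)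
  ultimately have "(cut j)\<^sup>*\<^sup>* (s j) (s (Suc j))" by (rule rtranclp_trans)
  moreover have "cut j = (\<lambda>u w. E u w \<and> {u, w} \<noteq> {s j, s (Suc j)})"
    by (intro ext) (simp add: cut_def)
  ultimately show False
    using edge_is_bridge[OF E_sym E_irrefl acyclic spine_edge[of j]] by simp
qed

lemma spine_beyond: "Suc j \<le> k \<Longrightarrow> s k \<notin> root_side j"
proof (induction k rule: dec_induct)
  case base then show ?case by (rule spine_Suc_beyond)
next
  case (step k)
  have "{s k, s (Suc k)} \<noteq> {s j, s (Suc j)}"
    using step.hyps by (auto simp: doubleton_eq_iff spine_inj)
  then show ?case using root_side_iff[OF spine_edge] step.IH by blast
qed

lemma level_root: "level r = 0"
  by (simp add: level_def beyond_def root_side_def)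

lemma level_spine_R: "level (s R) = real R"
  using spine_beyond by (simp add: level_def beyond_def)

lemma level_nonneg: "level u \<ge> 0"
  unfolding level_def beyond_def by (intro sum_nonneg) auto

text \<open>Discrete Laplacian of beyond j: only the edge {s_j, s_(j+1)} changes its value.\<close>
lemma laplacian_beyond:
  "(\<Sum>w\<in>{w. E u w}. beyond j w - beyond j u) =
     (if u = s j then 1 else 0) - (if u = s (Suc j) then 1 else 0)"
proof -
  let ?N = "{w. E u w}"
  let ?D = "{w\<in>?N. {u, w} = {s j, s (Suc j)}}"
  have "(\<Sum>w\<in>?N. beyond j w - beyond j u) = (\<Sum>w\<in>?D. beyond j w - beyond j u)"
    using root_side_iff locally_finite by (intro sum.mono_neutral_right) (auto simp: beyond_def)
  also have "\<dots> = (if u = s j then 1 else 0) - (if u = s (Suc j) then 1 else 0)"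
  proof -
    have ne: "s j \<noteq> s (Suc j)" by (simp add: spine_inj)
    have sides: "s j \<in> root_side j" "s (Suc j) \<notin> root_side j"
      using spine_in_root_side[of j j] spine_Suc_beyond by auto
    consider "u = s j" | "u = s (Suc j)" | "u \<noteq> s j \<and> u \<noteq> s (Suc j)" by blast
    then show ?thesis
    proof cases
      case 1
      have "?D = {s (Suc j)}" using 1 ne spine_edge[of j] by (auto simp: doubleton_eq_iff)
      then show ?thesis using 1 ne sides by (simp add: beyond_def)
    next
      case 2
      have "?D = {s j}" using 2 ne spine_edge[of j] E_sym by (auto simp: doubleton_eq_iff)
      then show ?thesis using 2 ne sides by (simp add: beyond_def)
    next
      case 3
      then have empty: "?D = {}" by (auto simp: doubleton_eq_iff)
      show ?thesis unfolding empty using 3 by simp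
    qed
  qed
  finally show ?thesis .
qed

text \<open>The Laplacian of level telescopes to a unit source at r and a unit sink at s_R.\<close>
lemma laplacian_level:
  "(\<Sum>w\<in>{w. E u w}. level w) =
     real (deg E u) * level u + (if u = r then 1 else 0) - (if u = s R then 1 else 0)"
proof -
  let ?N = "{w. E u w}"
  have "(\<Sum>w\<in>?N. level w) - real (deg E u) * level u = (\<Sum>w\<in>?N. level w - level u)"
    by (simp add: sum_subtractf deg_def)
  also have "\<dots> = (\<Sum>w\<in>?N. \<Sum>j<R. beyond j w - beyond j u)"
    by (simp add: level_def sum_subtractf)
  also have "\<dots> = (\<Sum>j<R. \<Sum>w\<in>?N. beyond j w - beyond j u)"
    by (rule sum.swap)
  also have "\<dots> = (\<Sum>j<R. (if u = s j then 1 else 0) - (if u = s (Suc j) then 1 else 0))"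
    by (simp add: laplacian_beyond)
  also have "\<dots> = (if u = s 0 then 1 else 0) - (if u = s R then 1 else 0)"
    by (rule sum_lessThan_telescope')
  finally show ?thesis using spine_0 by simp
qed

section \<open>The inner region and the hull\<close>

text \<open>The vertices reachable from r without passing through s_R: the killed walk lives here.\<close>
definition inner :: "'a set" where
  "inner = {u. (\<lambda>a b. E a b \<and> b \<noteq> s R)\<^sup>*\<^sup>* r u}"

definition comp_rel :: "nat \<Rightarrow> 'a \<Rightarrow> 'a \<Rightarrow> bool" where
  "comp_rel i u w \<longleftrightarrow> E u w \<and> {u, w} \<noteq> {s (i - 1), s i} \<and> {u, w} \<noteq> {s i, s (Suc i)}"

lemma A_comp_edges_eq:
  "A_comp_edges E r i = {{u, w} | u w. comp_rel i u w \<and> (comp_rel i)\<^sup>*\<^sup>* (s i) u}"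
proof -
  have "comp_rel i = (\<lambda>u w. E u w \<and> {u, w} \<noteq> {s (i - 1), s i} \<and> {u, w} \<noteq> {s i, s (Suc i)})"
    by (intro ext) (simp add: comp_rel_def)
  then show ?thesis by (simp add: A_comp_edges_def Let_def)
qed

lemma root_inner: "r \<in> inner" by (simp add: inner_def)

lemma spine_R_not_inner: "s R \<notin> inner"
proof
  assume "s R \<in> inner"
  then have "(\<lambda>a b. E a b \<and> b \<noteq> s R)\<^sup>*\<^sup>* r (s R)" by (simp add: inner_def)
  then show False using spine_R_ne_root by (cases rule: rtranclp.cases) auto
qed

lemma inner_step: "u \<in> inner \<Longrightarrow> E u w \<Longrightarrow> w \<noteq> s R \<Longrightarrow> w \<in> inner"
  unfolding inner_def by (auto intro: rtranclp.rtrancl_into_rtrancl)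

lemma inner_connected: "u \<in> inner \<Longrightarrow> E\<^sup>*\<^sup>* u r"
proof -
  assume "u \<in> inner"
  then have "(\<lambda>a b. E a b \<and> b \<noteq> s R)\<^sup>*\<^sup>* r u" by (simp add: inner_def)
  then have "E\<^sup>*\<^sup>* r u" by (rule rtranclp_mono[THEN predicate2D, rotated]) auto
  moreover have "symp E" using E_sym by (rule sympI)
  ultimately show ?thesis using symp_rtranclp by (metis sympD)
qed

lemma inner_has_nbr: "u \<in> inner \<Longrightarrow> \<exists>w. E u w"
proof -
  assume "u \<in> inner"
  then have h: "(\<lambda>a b. E a b \<and> b \<noteq> s R)\<^sup>*\<^sup>* r u" by (simp add: inner_def)
  show ?thesis
  proof (cases "u = r")
    case True then show ?thesis using spine_edge[of 0] spine_0 by auto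
  next
    case False
    from h False show ?thesis by (cases rule: rtranclp.cases) (auto dest: E_sym)
  qed
qed

lemma inner_deg: "u \<in> inner \<Longrightarrow> deg E u \<ge> 1"
proof -
  assume "u \<in> inner"
  then obtain w where "E u w" using inner_has_nbr by blast
  then have "{w. E u w} \<noteq> {}" by auto
  then show ?thesis using locally_finite[of u] by (simp add: deg_def Suc_le_eq card_gt_0_iff)
qed

lemma spine_vertex_cases:
  assumes "z = s k" "k < R" shows "z = r \<or> (\<exists>i. 1 \<le> i \<and> i < R \<and> (comp_rel i)\<^sup>*\<^sup>* (s i) z)"
proof (cases "k = 0")
  case True then show ?thesis using assms spine_0 by simp
next
  case False then show ?thesis using assms by (intro disjI2 exI[of _ k]) auto
qed

lemma inner_cases:
  assumes "u \<in> inner" shows "u = r \<or> (\<exists>i. 1 \<le> i \<and> i < R \<and> (comp_rel i)\<^sup>*\<^sup>* (s i) u)"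
proof -
  have "(\<lambda>a b. E a b \<and> b \<noteq> s R)\<^sup>*\<^sup>* r u" using assms by (simp add: inner_def)
  then show ?thesis
  proof (induction rule: rtranclp_induct)
    case base then show ?case by simp
  next
    case (step y z)
    have yz: "E y z" and z_ne: "z \<noteq> s R" using step.hyps by auto
    from step.IH show ?case
    proof
      assume "y = r"
      then have z1: "z = s 1" using root_nbr yz by simp
      then have "1 < R" using z_ne R_pos by (cases "R = 1") auto
      then show ?thesis using z1 by auto
    next
      assume "\<exists>i. 1 \<le> i \<and> i < R \<and> (comp_rel i)\<^sup>*\<^sup>* (s i) y"
      then obtain i where i: "1 \<le> i" "i < R" "(comp_rel i)\<^sup>*\<^sup>* (s i) y" by blast
      consider "{y, z} = {s (i - 1), s i}" | "{y, z} = {s i, s (Suc i)}" | "comp_rel i y z"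
        using yz by (auto simp: comp_rel_def)
      then show ?thesis
      proof cases
        case 1
        then have "z = s (i - 1) \<or> z = s i" by (auto simp: doubleton_eq_iff)
        moreover have "i - 1 < R" using i by simp
        ultimately show ?thesis using spine_vertex_cases[of z "i - 1"] spine_vertex_cases[of z i] i by blast
      next
        case 2
        then have "z = s i \<or> z = s (Suc i)" by (auto simp: doubleton_eq_iff)
        moreover have "z = s (Suc i) \<Longrightarrow> Suc i < R" using z_ne i by (cases "Suc i = R") auto
        ultimately show ?thesis using spine_vertex_cases[of z i] spine_vertex_cases[of z "Suc i"] i by blast
      next
        case 3
        then show ?thesis using i by (auto intro: rtranclp.rtrancl_into_rtrancl)
      qed
    qed
  qed
qed

lemma inner_edge_in_hull: "u \<in> inner \<Longrightarrow> E u w \<Longrightarrow> {u, w} \<in> hull_edges E r R"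
proof -
  assume u: "u \<in> inner" and uw: "E u w"
  have spine_hull: "\<And>i. i < R \<Longrightarrow> {s i, s (Suc i)} \<in> hull_edges E r R"
    unfolding hull_edges_def by blast
  from inner_cases[OF u] show ?thesis
  proof
    assume "u = r"
    then have "{u, w} = {s 0, s (Suc 0)}" using root_nbr uw spine_0 by simp
    then show ?thesis using spine_hull[of 0] R_pos by simp
  next
    assume "\<exists>i. 1 \<le> i \<and> i < R \<and> (comp_rel i)\<^sup>*\<^sup>* (s i) u"
    then obtain i where i: "1 \<le> i" "i < R" "(comp_rel i)\<^sup>*\<^sup>* (s i) u" by blast
    consider "{u, w} = {s (i - 1), s i}" | "{u, w} = {s i, s (Suc i)}" | "comp_rel i u w"
      using uw by (auto simp: comp_rel_def)
    then show ?thesis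
    proof cases
      case 1
      have "Suc (i - 1) = i" using i by simp
      then show ?thesis using 1 spine_hull[of "i - 1"] i by simp
    next
      case 2 then show ?thesis using spine_hull[of i] i by simp
    next
      case 3
      then have "{u, w} \<in> A_comp_edges E r i" unfolding A_comp_edges_eq using i by blast
      then show ?thesis unfolding hull_edges_def using i by auto
    qed
  qed
qed

text \<open>The spine is the only infinite branch: a non-backtracking path that starts at s_i and
  does not step back to s_(i-1) must continue along the spine (prefixing s_0 ... s_(i-1)
  gives a non-backtracking path from r, which is unique).\<close>
lemma spine_only_branch:
  assumes q0: "q 0 = s i" and q_step: "\<And>n. E (q n) (q (Suc n))"
    and q_nb: "\<And>n. q (Suc (Suc n)) \<noteq> q n" and q1: "q 1 \<noteq> s (i - 1)"
  shows "q 1 = s (Suc i)"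
proof -
  define t where "t n = (if n \<le> i then s n else q (n - i))" for n
  have t_step: "E (t n) (t (Suc n))" for n
  proof -
    consider "Suc n \<le> i" | "n = i" | "i < n" by linarith
    then show ?thesis
    proof cases
      case 1 then show ?thesis using spine_edge[of n] by (simp add: t_def)
    next
      case 2 then show ?thesis using q_step[of 0] q0 by (simp add: t_def)
    next
      case 3
      then have "Suc n - i = Suc (n - i)" by simp
      then show ?thesis using 3 q_step[of "n - i"] by (simp add: t_def)
    qed
  qed
  have t_nb: "t (Suc (Suc n)) \<noteq> t n" for n
  proof -
    consider "Suc (Suc n) \<le> i" | "Suc n = i" | "i \<le> n" by linarith
    then show ?thesis
    proof cases
      case 1 then show ?thesis using spine_no_back[of n] by (simp add: t_def)
    next
      case 2
      then have "Suc (Suc n) - i = 1" "n = i - 1" by auto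
      then show ?thesis using 2 q1 by (simp add: t_def)
    next
      case 3
      then have "Suc (Suc n) - i = Suc (Suc (n - i))" by simp
      then show ?thesis using 3 q_nb[of "n - i"] q_nb[of 0] q0 by (simp add: t_def)
    qed
  qed
  have "nbt_path E r t" unfolding nbt_path_def using t_step t_nb spine_0 by (simp add: t_def)
  then have "t = s" by (rule spine_unique)
  moreover have "t (Suc i) = q 1" by (simp add: t_def)
  ultimately show ?thesis by simp
qed

text \<open>Each A^i is finite: otherwise Koenig's lemma yields an infinite non-backtracking path
  in A^i from s_i, contradicting spine_only_branch since A^i avoids both spine edges at s_i.\<close>
lemma A_comp_finite: "finite (A_comp_edges E r i)"
proof -
  let ?F = "comp_rel i"
  have lf: "finite {w. ?F v w}" for v
    by (rule finite_subset[OF _ locally_finite[of v]]) (auto simp: comp_rel_def)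
  have fin_reach: "finite {u. ?F\<^sup>*\<^sup>* (s i) u}"
  proof (rule ccontr)
    assume "infinite {u. ?F\<^sup>*\<^sup>* (s i) u}"
    then obtain q where q0: "q 0 = s i" and q_step: "\<And>n. ?F (q n) (q (Suc n))"
      and q_nb: "\<And>n. q (Suc (Suc n)) \<noteq> q n"
      using koenig_nbt_path[of ?F, OF lf] by blast
    have "q 1 \<noteq> s (i - 1)" and "q 1 \<noteq> s (Suc i)"
      using q_step[of 0] q0 by (auto simp: comp_rel_def insert_commute)
    moreover have "\<And>n. E (q n) (q (Suc n))" using q_step by (simp add: comp_rel_def)
    ultimately show False using spine_only_branch[OF q0 _ q_nb] by blast
  qed
  have "A_comp_edges E r i \<subseteq> (\<lambda>(u, w). {u, w}) ` (SIGMA u:{u. ?F\<^sup>*\<^sup>* (s i) u}. {w. E u w})"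
    unfolding A_comp_edges_eq by (auto simp: comp_rel_def)
  moreover have "finite (SIGMA u:{u. ?F\<^sup>*\<^sup>* (s i) u}. {w. E u w})"
    using fin_reach locally_finite by (intro finite_SigmaI) auto
  ultimately show ?thesis using finite_subset by blast
qed

lemma hull_finite: "finite (hull_edges E r R)"
proof -
  have "{{s i, s (Suc i)} | i. i < R} = (\<lambda>i. {s i, s (Suc i)}) ` {..<R}" by auto
  then have "finite {{s i, s (Suc i)} | i. i < R}" by simp
  moreover have "finite (\<Union>i\<in>{1..R}. A_comp_edges E r i)"
    using A_comp_finite by blast
  ultimately show ?thesis unfolding hull_edges_def by (rule finite_UnI)
qed

lemma hull_edge_pair: "e \<in> hull_edges E r R \<Longrightarrow> \<exists>a b. e = {a, b}"
  unfolding hull_edges_def A_comp_edges_eq by blast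

lemma inner_finite: "finite inner"
proof -
  have "inner \<subseteq> \<Union>(hull_edges E r R)"
  proof
    fix u assume u: "u \<in> inner"
    then obtain w where "E u w" using inner_has_nbr by blast
    then have "{u, w} \<in> hull_edges E r R" using inner_edge_in_hull u by blast
    then show "u \<in> \<Union>(hull_edges E r R)" by blast
  qed
  moreover have "finite (\<Union>(hull_edges E r R))"
    using hull_finite hull_edge_pair by (intro finite_Union) auto
  ultimately show ?thesis using finite_subset by blast
qed

text \<open>Handshake bound: each hull edge is counted at most twice among inner degrees.\<close>
lemma inner_degree_sum_le: "(\<Sum>u\<in>inner. real (deg E u)) \<le> 2 * real (hull_size E r R)"
proof -
  let ?H = "hull_edges E r R"
  let ?S = "SIGMA u:inner. {w. E u w}"
  let ?P = "\<lambda>e. {(a, b). a \<in> e \<and> b \<in> e \<and> a \<noteq> b}"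
  have P_le_2: "?P e \<subseteq> {(a, b), (b, a)}" if "e = {a, b}" for e a b
    using that by auto
  have degree_sum: "(\<Sum>u\<in>inner. real (deg E u)) = real (card ?S)"
    using inner_finite locally_finite by (simp add: deg_def)
  have "card ?S \<le> card (\<Union>e\<in>?H. ?P e)"
  proof (rule card_mono)
    show "finite (\<Union>e\<in>?H. ?P e)"
    proof (intro finite_UN_I hull_finite)
      fix e assume "e \<in> ?H"
      then obtain a b where "e = {a, b}" using hull_edge_pair by blast
      then have "?P e \<subseteq> {(a, b), (b, a)}" by (rule P_le_2)
      then show "finite (?P e)" by (rule finite_subset) simp
    qed
    show "?S \<subseteq> (\<Union>e\<in>?H. ?P e)"
    proof
      fix p assume "p \<in> ?S"
      then obtain u w where p: "p = (u, w)" "u \<in> inner" "E u w" by blast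
      then have "{u, w} \<in> ?H" using inner_edge_in_hull by blast
      moreover have "u \<noteq> w" using p E_irrefl by auto
      ultimately show "p \<in> (\<Union>e\<in>?H. ?P e)" using p by blast
    qed
  qed
  also have "\<dots> \<le> (\<Sum>e\<in>?H. card (?P e))"
    using hull_finite by (rule card_UN_le)
  also have "\<dots> \<le> (\<Sum>e\<in>?H. 2)"
  proof (rule sum_mono)
    fix e assume "e \<in> ?H"
    then obtain a b where "e = {a, b}" using hull_edge_pair by blast
    then have "?P e \<subseteq> {(a, b), (b, a)}" by (rule P_le_2)
    then have "card (?P e) \<le> card {(a, b), (b, a)}" by (rule card_mono[rotated]) simp
    also have "\<dots> \<le> 2" by (rule order_trans[OF card_insert_le_m1]) auto
    finally show "card (?P e) \<le> 2" .
  qed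
  also have "\<dots> = 2 * card ?H" by simp
  finally have "card ?S \<le> 2 * card ?H" .
  then have "real (card ?S) \<le> 2 * real (card ?H)" by linarith
  then show ?thesis unfolding degree_sum hull_size_def .
qed

section \<open>The walk killed at r and at s_R\<close>

definition interior :: "'a \<Rightarrow> bool" where "interior v \<longleftrightarrow> v \<noteq> r \<and> v \<noteq> s R"

definition killed :: "nat \<Rightarrow> 'a \<Rightarrow> real" where "killed n v = walk_mass E r interior n v"

text \<open>Whether mass at u at time n is still moving (at time 0 the walk starts at r).\<close>
definition alive :: "nat \<Rightarrow> 'a \<Rightarrow> bool" where "alive n u \<longleftrightarrow> n = 0 \<or> interior u"

text \<open>All the mass lives on the finite set arena = inner \<union> {s_R}.\<close>
definition arena :: "'a set" where "arena = insert (s R) inner"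

lemma killed_nonneg: "killed n v \<ge> 0" by (simp add: killed_def walk_mass_nonneg)

lemma killed_0: "killed 0 v = (if v = r then 1 else 0)" by (simp add: killed_def walk_mass_0)

lemma killed_Suc:
  "killed (Suc n) v = (\<Sum>u\<in>{u. E u v \<and> alive n u}. killed n u / real (deg E u))"
  by (simp add: killed_def alive_def walk_mass_Suc[OF E_sym locally_finite])

lemma arena_finite: "finite arena" using inner_finite by (simp add: arena_def)

lemma root_arena: "r \<in> arena" using root_inner by (simp add: arena_def)

lemma killed_walks_in_arena: "walks_within E r interior n v \<noteq> {} \<Longrightarrow> v \<in> arena"
proof (induction n arbitrary: v)
  case 0 then show ?case using root_arena by (simp add: walks_within_0 split: if_splits)
next
  case (Suc n)
  then obtain u where u: "E u v" "n = 0 \<or> interior u" "walks_within E r interior n u \<noteq> {}"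
    unfolding walks_within_Suc by blast
  have "u \<in> inner"
  proof (cases "n = 0")
    case True then have "u = r" using u(3) by (simp add: walks_within_0 split: if_splits)
    then show ?thesis using root_inner by simp
  next
    case False
    then show ?thesis using u(2) Suc.IH[OF u(3)] by (auto simp: interior_def arena_def)
  qed
  then show ?case using inner_step u(1) by (auto simp: arena_def)
qed

lemma killed_outside_arena: "v \<notin> arena \<Longrightarrow> killed n v = 0"
proof -
  assume "v \<notin> arena"
  then have "walks_within E r interior n v = {}" using killed_walks_in_arena by blast
  then show ?thesis by (simp add: killed_def walk_mass_def)
qed

lemma alive_in_inner: "alive n u \<Longrightarrow> u \<in> arena \<Longrightarrow> killed n u \<noteq> 0 \<Longrightarrow> u \<in> inner"
  by (cases "n = 0") (auto simp: alive_def interior_def arena_def killed_0 root_inner split: if_splits)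

lemma killed_Suc_arena:
  "killed (Suc n) v = (\<Sum>u\<in>arena. if E u v \<and> alive n u then killed n u / real (deg E u) else 0)"
proof -
  let ?S = "{u. E u v \<and> alive n u}"
  have "finite ?S"
    by (rule finite_subset[OF _ locally_finite[of v]]) (auto dest: E_sym)
  then have "killed (Suc n) v = (\<Sum>u\<in>?S \<inter> arena. killed n u / real (deg E u))"
    unfolding killed_Suc using killed_outside_arena by (intro sum.mono_neutral_right) auto
  also have "\<dots> = (\<Sum>u\<in>arena \<inter> ?S. killed n u / real (deg E u))"
    by (simp add: Int_commute)
  also have "\<dots> = (\<Sum>u\<in>arena. if E u v \<and> alive n u then killed n u / real (deg E u) else 0)"
    using arena_finite by (simp add: sum.inter_restrict)
  finally show ?thesis .
qed

lemma push_forward: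
  "(\<Sum>v\<in>arena. killed (Suc n) v * g v) =
     (\<Sum>u\<in>arena. if alive n u then killed n u / real (deg E u) * (\<Sum>w\<in>{w. E u w}. g w) else 0)"
proof -
  let ?c = "\<lambda>u v. if E u v \<and> alive n u then killed n u / real (deg E u) else 0"
  have "(\<Sum>v\<in>arena. killed (Suc n) v * g v) = (\<Sum>v\<in>arena. \<Sum>u\<in>arena. ?c u v * g v)"
    by (simp add: killed_Suc_arena sum_distrib_right)
  also have "\<dots> = (\<Sum>u\<in>arena. \<Sum>v\<in>arena. ?c u v * g v)"
    by (rule sum.swap)
  also have "\<dots> = (\<Sum>u\<in>arena. if alive n u then killed n u / real (deg E u) * (\<Sum>w\<in>{w. E u w}. g w) else 0)"
  proof (rule sum.cong[OF refl])
    fix u assume u: "u \<in> arena"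
    show "(\<Sum>v\<in>arena. ?c u v * g v) =
          (if alive n u then killed n u / real (deg E u) * (\<Sum>w\<in>{w. E u w}. g w) else 0)"
    proof (cases "alive n u \<and> killed n u \<noteq> 0")
      case True
      then have "u \<in> inner" using alive_in_inner u by blast
      then have nbrs: "{v\<in>arena. E u v} = {v. E u v}"
        using inner_step by (auto simp: arena_def)
      have "(\<Sum>v\<in>arena. ?c u v * g v) = (\<Sum>v\<in>arena. if E u v then killed n u / real (deg E u) * g v else 0)"
        using True by (intro sum.cong) auto
      also have "\<dots> = killed n u / real (deg E u) * (\<Sum>w\<in>{w. E u w}. g w)"
        by (simp add: sum.inter_filter[OF arena_finite, symmetric] nbrs sum_distrib_left)
      finally show ?thesis using True by simp
    next
      case False
      then show ?thesis by (auto intro!: sum.neutral)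
    qed
  qed
  finally show ?thesis .
qed

lemma arena_sum_split:
  "(\<Sum>v\<in>arena. f v) = (\<Sum>v\<in>arena. if interior v then f v else 0) + f r + f (s R)"
proof -
  have "(\<Sum>v\<in>arena. f v) =
      (\<Sum>v\<in>arena. if interior v then f v else 0) + (\<Sum>v\<in>arena. if interior v then 0 else f v)"
    by (subst sum.distrib[symmetric]) (intro sum.cong, auto)
  also have "(\<Sum>v\<in>arena. if interior v then 0 else f v) = (\<Sum>v\<in>{r, s R}. if interior v then 0 else f v)"
    using arena_finite root_arena by (intro sum.mono_neutral_right) (auto simp: interior_def arena_def)
  also have "\<dots> = f r + f (s R)" using spine_R_ne_root by (simp add: interior_def)
  finally show ?thesis by (simp add: add.assoc)
qed

definition alive_mass :: "nat \<Rightarrow> real" where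
  "alive_mass n = (\<Sum>u\<in>arena. if alive n u then killed n u else 0)"

definition level_mass :: "nat \<Rightarrow> real" where
  "level_mass n = (\<Sum>u\<in>arena. if interior u then killed n u * level u else 0)"

lemma alive_mass_nonneg: "alive_mass n \<ge> 0"
  unfolding alive_mass_def using killed_nonneg by (intro sum_nonneg) auto

lemma level_mass_nonneg: "level_mass n \<ge> 0"
  unfolding level_mass_def using killed_nonneg level_nonneg by (intro sum_nonneg) auto

lemma alive_mass_step: "killed (Suc n) r + killed (Suc n) (s R) + alive_mass (Suc n) = alive_mass n"
proof -
  have "(\<Sum>v\<in>arena. killed (Suc n) v * 1) = alive_mass n"
    unfolding push_forward alive_mass_def
  proof (rule sum.cong[OF refl])
    fix u assume u: "u \<in> arena"
    show "(if alive n u then killed n u / real (deg E u) * (\<Sum>w\<in>{w. E u w}. 1) else 0) =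
          (if alive n u then killed n u else 0)"
    proof (cases "alive n u \<and> killed n u \<noteq> 0")
      case True
      then have "deg E u \<ge> 1" using alive_in_inner inner_deg u by blast
      then show ?thesis using True by (simp add: deg_def)
    qed auto
  qed
  moreover have "(\<Sum>v\<in>arena. killed (Suc n) v) = alive_mass (Suc n) + killed (Suc n) r + killed (Suc n) (s R)"
    by (subst arena_sum_split) (simp add: alive_mass_def alive_def)
  ultimately show ?thesis by simp
qed

text \<open>Optional stopping for the martingale level: the level mass decreases only by the
  mass R * killed (n+1) (s R) absorbed at s_R (after the first step, which moves mass 1
  from level 0 to level 1).\<close>
lemma level_mass_step:
  "level_mass (Suc n) + killed (Suc n) (s R) * real R = (if n = 0 then 1 else level_mass n)"
proof -
  have "(\<Sum>v\<in>arena. killed (Suc n) v * level v) =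
      (\<Sum>u\<in>arena. if n = 0 then (if u = r then 1 else 0) else (if interior u then killed n u * level u else 0))"
    unfolding push_forward
  proof (rule sum.cong[OF refl])
    fix u assume u: "u \<in> arena"
    show "(if alive n u then killed n u / real (deg E u) * (\<Sum>w\<in>{w. E u w}. level w) else 0) =
          (if n = 0 then (if u = r then 1 else 0) else (if interior u then killed n u * level u else 0))"
    proof (cases "alive n u \<and> killed n u \<noteq> 0")
      case True
      then have "deg E u \<ge> 1" using alive_in_inner inner_deg u by blast
      then show ?thesis using True deg_root spine_R_ne_root level_root
        by (cases "n = 0") (auto simp: laplacian_level killed_0 alive_def interior_def)
    next
      case False
      then show ?thesis by (auto simp: killed_0 alive_def)
    qed
  qed
  also have "\<dots> = (if n = 0 then 1 else level_mass n)"
    using arena_finite root_arena by (simp add: level_mass_def)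
  finally have "(\<Sum>v\<in>arena. killed (Suc n) v * level v) = (if n = 0 then 1 else level_mass n)" .
  moreover have "(\<Sum>v\<in>arena. killed (Suc n) v * level v) = level_mass (Suc n) + killed (Suc n) (s R) * real R"
    by (subst arena_sum_split) (simp add: level_mass_def level_root level_spine_R)
  ultimately show ?thesis by simp
qed

lemma alive_mass_0: "alive_mass 0 = 1"
  using arena_finite root_arena by (simp add: alive_mass_def alive_def killed_0)

lemma mass_balance:
  "(\<Sum>k<N. killed (Suc k) r + killed (Suc k) (s R)) + alive_mass N = 1"
proof (induction N)
  case 0 then show ?case using alive_mass_0 by simp
next
  case (Suc N) then show ?case using alive_mass_step[of N] by simp
qed

lemma hit_spine_R_le: "(\<Sum>k<N. killed (Suc k) (s R)) \<le> 1 / real R"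
proof (cases N)
  case 0 then show ?thesis by simp
next
  case (Suc M)
  have "real R * (\<Sum>k<Suc M. killed (Suc k) (s R)) + level_mass (Suc M) = 1"
  proof (induction M)
    case 0 then show ?case using level_mass_step[of 0] by (simp add: algebra_simps)
  next
    case (Suc M) then show ?case using level_mass_step[of "Suc M"] by (simp add: algebra_simps)
  qed
  then have "real R * (\<Sum>k<N. killed (Suc k) (s R)) \<le> 1"
    unfolding Suc using level_mass_nonneg[of "Suc M"] by linarith
  then show ?thesis using R_pos by (simp add: field_simps)
qed

text \<open>Summation by parts: the time-weighted returns plus N times the mass still alive at
  time N are bounded by the expected lifetime up to N.\<close>
lemma time_weighted_returns:
  "(\<Sum>k<N. real (Suc k) * killed (Suc k) r) + real N * alive_mass N \<le> (\<Sum>n<N. alive_mass n)"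
proof (induction N)
  case 0 then show ?case by simp
next
  case (Suc N)
  have "killed (Suc N) r + alive_mass (Suc N) \<le> alive_mass N"
    using alive_mass_step[of N] killed_nonneg[of "Suc N" "s R"] by linarith
  then have "real (Suc N) * (killed (Suc N) r + alive_mass (Suc N)) \<le> real (Suc N) * alive_mass N"
    by (intro mult_left_mono) auto
  then show ?case using Suc.IH by (simp add: algebra_simps)
qed

section \<open>Expected lifetime: a Green function bound\<close>

definition green :: "nat \<Rightarrow> 'a \<Rightarrow> real" where
  "green N v = (\<Sum>n<N. if alive n v then killed n v else 0)"

lemma lifetime_eq_green_sum: "(\<Sum>n<N. alive_mass n) = (\<Sum>v\<in>arena. green N v)"
  unfolding alive_mass_def green_def by (rule sum.swap)

lemma green_mono: "green N v \<le> green (Suc N) v"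
  unfolding green_def using killed_nonneg by simp

lemma green_root: "green N r = (if N = 0 then 0 else 1)"
proof (induction N)
  case 0 then show ?case by (simp add: green_def)
next
  case (Suc N)
  have "green (Suc N) r = green N r + (if alive N r then killed N r else 0)" by (simp add: green_def)
  then show ?case using Suc by (simp add: alive_def interior_def killed_0)
qed

lemma green_spine_R: "green N (s R) = 0"
  unfolding green_def using spine_R_ne_root
  by (intro sum.neutral) (auto simp: alive_def interior_def killed_0)

lemma green_Suc:
  assumes v: "v \<in> inner" "v \<noteq> r"
  shows "green (Suc N) v = (\<Sum>u\<in>{u. E u v}. green N u / real (deg E u))"
proof -
  have alive_v: "alive n v" for n using v spine_R_not_inner by (auto simp: alive_def interior_def)
  have fin: "finite {u. E u v}"
    by (rule finite_subset[OF _ locally_finite[of v]]) (auto dest: E_sym)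
  have "green (Suc N) v = (\<Sum>n<Suc N. killed n v)" by (simp add: green_def alive_v)
  also have "\<dots> = killed 0 v + (\<Sum>n<N. killed (Suc n) v)" by (rule sum.lessThan_Suc_shift)
  also have "killed 0 v = 0" using v by (simp add: killed_0)
  also have "(\<Sum>n<N. killed (Suc n) v) =
      (\<Sum>n<N. \<Sum>u\<in>{u. E u v}. (if alive n u then killed n u else 0) / real (deg E u))"
  proof (rule sum.cong[OF refl])
    fix n
    have "{u. E u v \<and> alive n u} = {u\<in>{u. E u v}. alive n u}" by auto
    then have "killed (Suc n) v = (\<Sum>u\<in>{u\<in>{u. E u v}. alive n u}. killed n u / real (deg E u))"
      by (simp add: killed_Suc)
    also have "\<dots> = (\<Sum>u\<in>{u. E u v}. if alive n u then killed n u / real (deg E u) else 0)"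
      using fin by (rule sum.inter_filter)
    also have "\<dots> = (\<Sum>u\<in>{u. E u v}. (if alive n u then killed n u else 0) / real (deg E u))"
      by (intro sum.cong refl) simp
    finally show "killed (Suc n) v = (\<Sum>u\<in>{u. E u v}. (if alive n u then killed n u else 0) / real (deg E u))" .
  qed
  also have "\<dots> = (\<Sum>u\<in>{u. E u v}. green N u / real (deg E u))"
    by (simp add: green_def sum_divide_distrib sum.swap[of _ "{..<N}"])
  finally show ?thesis by simp
qed

definition green_ratio :: "nat \<Rightarrow> 'a \<Rightarrow> real" where
  "green_ratio N v = green N v / real (deg E v)"

lemma green_ratio_root: "green_ratio N r \<le> 1"
  using deg_root green_root by (simp add: green_ratio_def)

lemma green_ratio_spine_R: "green_ratio N (s R) = 0"
  by (simp add: green_ratio_def green_spine_R)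

text \<open>A maximum M > 1 of green_ratio over inner spreads to all neighbours: at a maximiser
  v \<noteq> r the Green equation makes deg v * M an average of values \<le> M.\<close>
lemma green_ratio_max_spreads:
  assumes v: "v \<in> inner" "green_ratio N v = M" and bound: "\<forall>u\<in>inner. green_ratio N u \<le> M"
    and M: "1 < M" and vu: "E v u"
  shows "u \<in> inner \<and> green_ratio N u = M"
proof -
  let ?g = "green_ratio N"
  let ?N = "{u. E u v}"
  have v_ne_r: "v \<noteq> r" using v green_ratio_root[of N] M by auto
  have N_eq: "?N = {u. E v u}" using E_sym by auto
  have fin: "finite ?N" using N_eq locally_finite by simp
  have nbrs_bounded: "\<forall>w\<in>?N. ?g w \<le> M"
  proof
    fix w assume "w \<in> ?N"
    then have "E v w" using E_sym by auto
    then show "?g w \<le> M"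
      using green_ratio_spine_R M inner_step[OF v(1)] bound by (cases "w = s R") auto
  qed
  have "real (card ?N) * M = green N v"
    using v inner_deg[OF v(1)] N_eq by (simp add: green_ratio_def deg_def field_simps)
  also have "\<dots> \<le> green (Suc N) v" by (rule green_mono)
  also have "\<dots> = (\<Sum>w\<in>?N. ?g w)" using green_Suc[OF v(1) v_ne_r] by (simp add: green_ratio_def)
  finally have "?g u = M"
    using average_ge_bound_imp_eq[OF fin nbrs_bounded] vu E_sym by blast
  moreover have "u \<noteq> s R" using calculation green_ratio_spine_R M by auto
  ultimately show ?thesis using inner_step[OF v(1) vu] by simp
qed

text \<open>Maximum principle: green N v \<le> deg v on inner.  A maximum M > 1 of green_ratio
  over the finite connected set inner would spread along edges up to r, where the ratio
  is at most 1.\<close>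
lemma green_le_deg:
  assumes v: "v \<in> inner" shows "green N v \<le> real (deg E v)"
proof -
  define M where "M = Max (green_ratio N ` inner)"
  have bound: "\<forall>u\<in>inner. green_ratio N u \<le> M" unfolding M_def using inner_finite by auto
  have "M \<le> 1"
  proof (rule ccontr)
    assume "\<not> M \<le> 1"
    then have M: "M > 1" by simp
    have "M \<in> green_ratio N ` inner"
      unfolding M_def using inner_finite root_inner by (intro Max_in) auto
    then obtain v0 where v0: "v0 \<in> inner" "green_ratio N v0 = M" by auto
    have "z \<in> inner \<and> green_ratio N z = M" if "E\<^sup>*\<^sup>* v0 z" for z
      using that
    proof (induction rule: rtranclp_induct)
      case base then show ?case using v0 by simp
    next
      case (step y z) then show ?case using green_ratio_max_spreads[OF _ _ bound M] by blast
    qed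
    then have "green_ratio N r = M" using inner_connected[OF v0(1)] by blast
    then show False using green_ratio_root[of N] M by simp
  qed
  then have "green_ratio N v \<le> 1" using bound v by fastforce
  then show ?thesis using inner_deg[OF v] by (simp add: green_ratio_def field_simps)
qed

lemma lifetime_le_inner_degrees: "(\<Sum>n<N. alive_mass n) \<le> (\<Sum>u\<in>inner. real (deg E u))"
proof -
  have "(\<Sum>n<N. alive_mass n) = green N (s R) + (\<Sum>v\<in>inner. green N v)"
    unfolding lifetime_eq_green_sum arena_def using inner_finite spine_R_not_inner by simp
  also have "\<dots> \<le> (\<Sum>u\<in>inner. real (deg E u))"
    using green_le_deg green_spine_R by (simp add: sum_mono)
  finally show ?thesis .
qed

section \<open>The lower bound on P_gen\<close>

text \<open>Killing also at s_R only removes first-return paths.\<close>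
lemma killed_root_le_first_return: "killed (Suc t) r \<le> first_return_prob E r (Suc t)"
proof -
  have "walks_within E r interior (Suc t) r \<subseteq> walks_within E r (\<lambda>v. v \<noteq> r) (Suc t) r"
    by (auto simp: walks_within_def interior_def)
  then have "walk_mass E r interior (Suc t) r \<le> walk_mass E r (\<lambda>v. v \<noteq> r) (Suc t) r"
    unfolding walk_mass_def
    by (intro sum_mono2 finite_walks_within[OF E_sym locally_finite]) (auto intro: walk_weight_nonneg)
  then show ?thesis by (simp add: first_return_prob_eq_walk_mass killed_def)
qed

lemma killed_1_root: "killed (Suc 0) r = 0"
  unfolding killed_Suc using E_irrefl by (intro sum.neutral) (auto simp: killed_0)

text \<open>Replacing (1-x)^((t+1)/2) by its Bernoulli lower bound (valid for t \<ge> 1; the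
  term t = 0 vanishes since r has no loop) and the first-return probabilities by the
  killed returns, a truncation of P_gen is bounded from below.\<close>
lemma linearized_returns_le_P_gen:
  assumes x: "0 < x" "x \<le> 1"
  shows "(\<Sum>t<N. killed (Suc t) r * (1 - x * real (Suc t) / 2)) \<le> P_gen E r x"
proof -
  have "killed (Suc t) r * (1 - x * real (Suc t) / 2)
        \<le> first_return_prob E r (Suc t) * (1 - x) powr (real (Suc t) / 2)" for t
  proof -
    have "killed (Suc t) r * (1 - x * real (Suc t) / 2) \<le> killed (Suc t) r * (1 - x) powr (real (Suc t) / 2)"
    proof (cases "t = 0")
      case True then show ?thesis using killed_1_root by simp
    next
      case False
      have "1 - real (Suc t) / 2 * (1 - (1 - x)) \<le> (1 - x) powr (real (Suc t) / 2)"
        using x False by (intro bernoulli_powr) auto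
      then show ?thesis using killed_nonneg by (intro mult_left_mono) (auto simp: algebra_simps)
    qed
    also have "\<dots> \<le> first_return_prob E r (Suc t) * (1 - x) powr (real (Suc t) / 2)"
      using killed_root_le_first_return by (intro mult_right_mono) auto
    finally show ?thesis .
  qed
  then have "(\<Sum>t<N. killed (Suc t) r * (1 - x * real (Suc t) / 2))
      \<le> (\<Sum>t<N. first_return_prob E r (Suc t) * (1 - x) powr (real (Suc t) / 2))"
    by (rule sum_mono)
  also have "\<dots> \<le> P_gen E r x" by (rule partial_sum_le_P_gen[OF E_sym locally_finite x])
  finally show ?thesis .
qed

text \<open>Combining mass balance, the bound 1/R on reaching s_R and the lifetime bound: once
  x N \<ge> 2, the unreturned mass at time N is paid for by the lifetime term.\<close>
lemma linearized_returns_ge: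
  assumes x: "0 \<le> x" and N: "2 \<le> x * real N"
  shows "1 - 1 / real R - x / 2 * (\<Sum>u\<in>inner. real (deg E u))
           \<le> (\<Sum>t<N. killed (Suc t) r * (1 - x * real (Suc t) / 2))"
proof -
  let ?a = "\<lambda>t. killed (Suc t) r"
  define K where "K = (\<Sum>u\<in>inner. real (deg E u))"
  have returns: "(\<Sum>t<N. ?a t) \<ge> 1 - alive_mass N - 1 / real R"
    using mass_balance[of N] hit_spine_R_le[of N] by (simp add: sum.distrib)
  have time: "(\<Sum>t<N. real (Suc t) * ?a t) \<le> K - real N * alive_mass N"
    using time_weighted_returns[of N] lifetime_le_inner_degrees[of N] by (simp add: K_def)
  have "alive_mass N \<le> x / 2 * (real N * alive_mass N)"
    using mult_right_mono[OF N alive_mass_nonneg[of N]] by (simp add: algebra_simps)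
  then have "1 - 1 / real R - x / 2 * K
      \<le> (1 - alive_mass N - 1 / real R) - x / 2 * (K - real N * alive_mass N)"
    by (simp add: algebra_simps)
  also have "\<dots> \<le> (\<Sum>t<N. ?a t) - x / 2 * (\<Sum>t<N. real (Suc t) * ?a t)"
    using returns mult_left_mono[OF time, of "x / 2"] x by simp
  also have "\<dots> = (\<Sum>t<N. ?a t - x / 2 * (real (Suc t) * ?a t))"
    by (simp add: sum_subtractf sum_distrib_left)
  also have "\<dots> = (\<Sum>t<N. ?a t * (1 - x * real (Suc t) / 2))"
    by (intro sum.cong refl) (simp add: algebra_simps)
  finally show ?thesis by (simp add: K_def)
qed

end

theorem lemma3:
  fixes V :: "'a set" and E :: "'a \<Rightarrow> 'a \<Rightarrow> bool" and r :: 'a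
    and R :: nat and x :: real
  assumes "in_Gamma_S_inf V E r"
    and "R \<ge> 1"
    and "0 < x" and "x \<le> 1"
  shows "P_gen E r x \<ge> 1 - 1 / real R - x * real (hull_size E r R)"
proof -
  interpret spine_tree V E r R using assms(1,2) by unfold_locales
  define N where "N = nat \<lceil>2 / x\<rceil>"
  have "2 / x \<le> real N" unfolding N_def by linarith
  then have "2 \<le> x * real N" using assms(3) by (simp add: field_simps)
  then have "1 - 1 / real R - x / 2 * (\<Sum>u\<in>inner. real (deg E u))
      \<le> (\<Sum>t<N. killed (Suc t) r * (1 - x * real (Suc t) / 2))"
    using assms(3) by (intro linearized_returns_ge) auto
  also have "\<dots> \<le> P_gen E r x" using assms(3,4) by (rule linearized_returns_le_P_gen)
  moreover have "x / 2 * (\<Sum>u\<in>inner. real (deg E u)) \<le> x * real (hull_size E r R)"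
    using inner_degree_sum_le assms(3) by simp
  ultimately show ?thesis by linarith
qed

end
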